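(* Let $q(y,z|x)$ be a broadcast channel with finite alphabets such that $q(y|x)>0$ and $q(z|x)>0$ for all $x,y,z$. Fix $\lambda\in[0,1]$ and let $p(u,v,w,x)$ (finite alphabets) be a joint distribution with $H(X|U,V,W)=0$ that maximizes $$\lambda I(W;Y)+(1-\lambda)I(W;Z)+I(U;Y|W)+I(V;Z|W)-I(U;V|W)$$ over all finite-alphabet $p(u,v,w,x)$, where $(U,V,W,X,Y,Z)\sim p(u,v,w,x)q(y,z|x)$. If $(u,v,w)$ is such that $p(u,w)>0$ and $p(v,w)>0$, then $p(u,v,w)>0$, and $p(u,w,y)>0$ and $p(v,w,z)>0$ for all $y\in\mathcal Y$, $z\in\mathcal Z$.
   Context: A two-receiver discrete memoryless broadcast channel has finite input alphabet $\mathcal X$, finite output alphabets $\mathcal Y,\mathcal Z$ and transition law $q(y,z|x)$. *)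

theory Defs
  imports Main "HOL-Library.Log_Nat" Complex_Main
begin

text \<open>Discrete distributions are functions into the reals with finite support.
  Auxiliary alphabets of U, V, W are encoded as finite subsets of nat.\<close>

definition supp :: "('a \<Rightarrow> real) \<Rightarrow> 'a set" where
  "supp \<mu> = {a. \<mu> a \<noteq> 0}"

definition is_dist :: "('a \<Rightarrow> real) \<Rightarrow> bool" where
  "is_dist \<mu> \<longleftrightarrow> (\<forall>a. 0 \<le> \<mu> a) \<and> finite (supp \<mu>) \<and> sum \<mu> (supp \<mu>) = 1"

definition marg :: "('a \<Rightarrow> real) \<Rightarrow> ('a \<Rightarrow> 'b) \<Rightarrow> 'b \<Rightarrow> real" where
  "marg \<mu> g b = (\<Sum>a\<in>supp \<mu>. if g a = b then \<mu> a else 0)"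

definition ent :: "('a \<Rightarrow> real) \<Rightarrow> ('a \<Rightarrow> 'b) \<Rightarrow> real" where
  "ent \<mu> g = - (\<Sum>b\<in>g ` supp \<mu>. marg \<mu> g b * log 2 (marg \<mu> g b))"

definition cmi :: "('a \<Rightarrow> real) \<Rightarrow> ('a \<Rightarrow> 'b) \<Rightarrow> ('a \<Rightarrow> 'c) \<Rightarrow> ('a \<Rightarrow> 'd) \<Rightarrow> real" where
  "cmi \<mu> A B C = ent \<mu> (\<lambda>t. (A t, C t)) + ent \<mu> (\<lambda>t. (B t, C t))
                 - ent \<mu> (\<lambda>t. (A t, B t, C t)) - ent \<mu> C"

definition mi :: "('a \<Rightarrow> real) \<Rightarrow> ('a \<Rightarrow> 'b) \<Rightarrow> ('a \<Rightarrow> 'c) \<Rightarrow> real" where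
  "mi \<mu> A B = cmi \<mu> A B (\<lambda>_. ())"

definition is_bc :: "('x::finite \<Rightarrow> 'y::finite \<Rightarrow> 'z::finite \<Rightarrow> real) \<Rightarrow> bool" where
  "is_bc q \<longleftrightarrow> (\<forall>x y z. 0 \<le> q x y z) \<and> (\<forall>x. (\<Sum>y\<in>UNIV. \<Sum>z\<in>UNIV. q x y z) = 1)"

definition joint :: "(nat \<times> nat \<times> nat \<times> 'x \<Rightarrow> real) \<Rightarrow> ('x \<Rightarrow> 'y \<Rightarrow> 'z \<Rightarrow> real)
                     \<Rightarrow> (nat \<times> nat \<times> nat \<times> 'x \<times> 'y \<times> 'z) \<Rightarrow> real" where
  "joint p q = (\<lambda>(u,v,w,x,y,z). p (u,v,w,x) * q x y z)"

definition rvU :: "nat \<times> nat \<times> nat \<times> 'x \<times> 'y \<times> 'z \<Rightarrow> nat" where "rvU = (\<lambda>(u,v,w,x,y,z). u)"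
definition rvV :: "nat \<times> nat \<times> nat \<times> 'x \<times> 'y \<times> 'z \<Rightarrow> nat" where "rvV = (\<lambda>(u,v,w,x,y,z). v)"
definition rvW :: "nat \<times> nat \<times> nat \<times> 'x \<times> 'y \<times> 'z \<Rightarrow> nat" where "rvW = (\<lambda>(u,v,w,x,y,z). w)"
definition rvX :: "nat \<times> nat \<times> nat \<times> 'x \<times> 'y \<times> 'z \<Rightarrow> 'x" where "rvX = (\<lambda>(u,v,w,x,y,z). x)"
definition rvY :: "nat \<times> nat \<times> nat \<times> 'x \<times> 'y \<times> 'z \<Rightarrow> 'y" where "rvY = (\<lambda>(u,v,w,x,y,z). y)"
definition rvZ :: "nat \<times> nat \<times> nat \<times> 'x \<times> 'y \<times> 'z \<Rightarrow> 'z" where "rvZ = (\<lambda>(u,v,w,x,y,z). z)"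

definition objective :: "real \<Rightarrow> ('x::finite \<Rightarrow> 'y::finite \<Rightarrow> 'z::finite \<Rightarrow> real)
                         \<Rightarrow> (nat \<times> nat \<times> nat \<times> 'x \<Rightarrow> real) \<Rightarrow> real" where
  "objective lam q p =
     (let J = joint p q in
        lam * mi J rvW rvY + (1 - lam) * mi J rvW rvZ
        + cmi J rvU rvY rvW + cmi J rvV rvZ rvW - cmi J rvU rvV rvW)"

end

theory Submission
  imports Defs "HOL-Real_Asymp.Real_Asymp"
begin

text \<open>If p(u,w) > 0 then p(u,w,y) > 0 for every y, because the channel gives every output y
  positive probability; likewise p(v,w,z) > 0. Now suppose p(u,v,w) = 0 and move weight e from p
  to the point mass at (u,v,w,x). Every entropy in the objective except H(U,V,W) is a function of
  (U,W,Y) or of (V,W,Z), and the point mass only charges values of these that already have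
  positive probability, so those entropies move by O(e). The value (u,v,w) of (U,V,W), however,
  is new and H(U,V,W) grows by about c e log(1/e). Hence the objective increases for small e,
  contradicting maximality.\<close>

definition plogp :: "real \<Rightarrow> real" where
  "plogp t = t * log 2 t"

lemma plogp_0 [simp]: "plogp 0 = 0"
  by (simp add: plogp_def)

lemma DERIV_imp_diff_bigo:
  assumes "DERIV f 0 :> D"
  shows "(\<lambda>e. f e - f 0) \<in> O[at_right 0](\<lambda>e. e)"
proof -
  have "(\<lambda>e. f e - f 0) \<in> O[at 0](\<lambda>e. e)"
    using assms unfolding DERIV_def
    by (intro bigoI_tendsto[where c = D]) (auto simp: eventually_at_filter)
  then show ?thesis
    by (rule landau_o.big.filter_mono[rotated]) (simp add: at_le)
qed

lemma plogp_affine_bigo: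
  fixes a c :: real
  assumes "0 \<le> a" and "a = 0 \<Longrightarrow> c = 0"
  shows "(\<lambda>e. plogp ((1 - e) * a + e * c) - plogp a) \<in> O[at_right 0](\<lambda>e. e)"
proof (cases "a = 0")
  case True
  then show ?thesis using assms by simp
next
  case False
  with assms have "a > 0" by simp
  have "DERIV (\<lambda>e. plogp ((1 - e) * a + e * c)) 0 :> (c - a) * (ln a + 1) / ln 2"
    unfolding plogp_def log_def using \<open>a > 0\<close>
    by (auto intro!: derivative_eq_intros simp: field_simps)
  from DERIV_imp_diff_bigo[OF this] show ?thesis by simp
qed

text \<open>The term -plogp (e c), of order e log(1/e), dominates every O(e) term.\<close>

lemma eventually_pos_if_plus_plogp_bigo:
  fixes f :: "real \<Rightarrow> real"
  assumes "c > 0" and "(\<lambda>e. f e + plogp (e * c)) \<in> O[at_right 0](\<lambda>e. e)"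
  shows "eventually (\<lambda>e. f e > 0) (at_right 0)"
proof -
  have "(\<lambda>e. e) \<in> o[at_right 0](\<lambda>e. plogp (e * c))"
    unfolding plogp_def using \<open>c > 0\<close> by real_asymp
  with assms(2) have "(\<lambda>e. f e + plogp (e * c)) \<in> o[at_right 0](\<lambda>e. plogp (e * c))"
    by (rule landau_o.big_small_trans)
  then have small: "eventually (\<lambda>e. \<bar>f e + plogp (e * c)\<bar> \<le> 1/2 * \<bar>plogp (e * c)\<bar>) (at_right 0)"
    by (auto dest: landau_o.smallD[where c = "1/2"])
  have "eventually (\<lambda>e. 0 < e \<and> e < 1 / c) (at_right 0)"
    using \<open>c > 0\<close>
    by (intro eventually_conj eventually_at_right_less)
      (auto simp: eventually_at_right_field intro!: exI[of _ "1 / c"])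
  then have neg: "eventually (\<lambda>e. plogp (e * c) < 0) (at_right 0)"
  proof eventually_elim
    case (elim e)
    then have "0 < e * c" "e * c < 1" using \<open>c > 0\<close> by (auto simp: field_simps)
    then show ?case unfolding plogp_def by (intro mult_pos_neg) simp_all
  qed
  from small neg show ?thesis
    by eventually_elim linarith
qed

definition mix :: "real \<Rightarrow> ('a \<Rightarrow> real) \<Rightarrow> ('a \<Rightarrow> real) \<Rightarrow> 'a \<Rightarrow> real" where
  "mix e \<mu>1 \<mu>2 = (\<lambda>a. (1 - e) * \<mu>1 a + e * \<mu>2 a)"

lemma supp_mix: "supp (mix e \<mu>1 \<mu>2) \<subseteq> supp \<mu>1 \<union> supp \<mu>2"
  by (auto simp: supp_def mix_def)

lemma sum_supp_eq:
  assumes "finite A" "supp \<mu> \<subseteq> A"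
  shows "sum \<mu> (supp \<mu>) = sum \<mu> A"
  using assms by (intro sum.mono_neutral_left) (auto simp: supp_def)

lemma marg_eq_sum:
  assumes "finite A" "supp \<mu> \<subseteq> A"
  shows "marg \<mu> g b = (\<Sum>a\<in>A. if g a = b then \<mu> a else 0)"
  unfolding marg_def using assms by (intro sum.mono_neutral_left) (auto simp: supp_def)

lemma marg_nonneg: "(\<And>a. 0 \<le> \<mu> a) \<Longrightarrow> 0 \<le> marg \<mu> g b"
  unfolding marg_def by (intro sum_nonneg) simp

lemma marg_nonzero_imp_supp:
  assumes "marg \<mu> g b \<noteq> 0"
  shows "\<exists>a\<in>supp \<mu>. g a = b"
proof (rule ccontr)
  assume "\<not> ?thesis"
  then have "marg \<mu> g b = 0"
    unfolding marg_def by (intro sum.neutral) auto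
  with assms show False by simp
qed

lemma marg_ge:
  assumes "\<And>a. 0 \<le> \<mu> a" "finite (supp \<mu>)" "g a = b"
  shows "\<mu> a \<le> marg \<mu> g b"
proof (cases "a \<in> supp \<mu>")
  case True
  then have "(if g a = b then \<mu> a else 0) \<le> marg \<mu> g b"
    unfolding marg_def using assms(1,2) by (intro member_le_sum) auto
  then show ?thesis using assms(3) by simp
next
  case False
  then show ?thesis using marg_nonneg[of \<mu>] assms(1) by (simp add: supp_def)
qed

lemma marg_le_marg_coarser:
  assumes "\<And>a. 0 \<le> \<mu> a" and "\<forall>a a'. \<kappa> a = \<kappa> a' \<longrightarrow> g a = g a'"
  shows "marg \<mu> \<kappa> (\<kappa> a) \<le> marg \<mu> g (g a)"
  unfolding marg_def
proof (rule sum_mono)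
  fix a'
  show "(if \<kappa> a' = \<kappa> a then \<mu> a' else 0) \<le> (if g a' = g a then \<mu> a' else 0)"
  proof (cases "\<kappa> a' = \<kappa> a")
    case True
    then have "g a' = g a" using assms(2) by blast
    with True show ?thesis by simp
  qed (simp add: assms(1))
qed

lemma marg_mix:
  assumes "finite (supp \<mu>1)" "finite (supp \<mu>2)"
  shows "marg (mix e \<mu>1 \<mu>2) g = mix e (marg \<mu>1 g) (marg \<mu>2 g)"
proof
  fix b
  let ?A = "supp \<mu>1 \<union> supp \<mu>2"
  have "marg (mix e \<mu>1 \<mu>2) g b = (\<Sum>a\<in>?A. if g a = b then mix e \<mu>1 \<mu>2 a else 0)"
    using assms by (intro marg_eq_sum supp_mix) auto
  also have "\<dots> = (1 - e) * (\<Sum>a\<in>?A. if g a = b then \<mu>1 a else 0)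
                    + e * (\<Sum>a\<in>?A. if g a = b then \<mu>2 a else 0)"
    unfolding sum_distrib_left sum.distrib[symmetric] by (intro sum.cong) (auto simp: mix_def)
  also have "\<dots> = mix e (marg \<mu>1 g) (marg \<mu>2 g) b"
    using assms by (simp add: mix_def marg_eq_sum[of ?A])
  finally show "marg (mix e \<mu>1 \<mu>2) g b = mix e (marg \<mu>1 g) (marg \<mu>2 g) b" .
qed

lemma is_dist_mix:
  assumes "is_dist \<mu>1" "is_dist \<mu>2" "0 \<le> e" "e \<le> 1"
  shows "is_dist (mix e \<mu>1 \<mu>2)"
proof -
  let ?A = "supp \<mu>1 \<union> supp \<mu>2"
  have fin: "finite ?A" using assms(1,2) by (simp add: is_dist_def)
  have "sum (mix e \<mu>1 \<mu>2) (supp (mix e \<mu>1 \<mu>2)) = sum (mix e \<mu>1 \<mu>2) ?A"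
    using fin supp_mix by (rule sum_supp_eq)
  also have "\<dots> = (1 - e) * sum \<mu>1 ?A + e * sum \<mu>2 ?A"
    by (simp add: mix_def sum.distrib sum_distrib_left)
  also have "\<dots> = 1"
    using assms(1,2) fin by (simp add: is_dist_def flip: sum_supp_eq)
  moreover have "0 \<le> mix e \<mu>1 \<mu>2 a" for a
    using assms by (simp add: is_dist_def mix_def)
  moreover have "finite (supp (mix e \<mu>1 \<mu>2))"
    using fin supp_mix by (rule finite_subset[rotated])
  ultimately show ?thesis
    by (simp add: is_dist_def)
qed

lemma ent_eq_sum:
  assumes "finite A" "supp \<mu> \<subseteq> A"
  shows "ent \<mu> g = - (\<Sum>b\<in>g ` A. plogp (marg \<mu> g b))"
proof -
  have "marg \<mu> g b = 0" if "b \<notin> g ` supp \<mu>" for b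
    using marg_nonzero_imp_supp[of \<mu> g b] that by force
  then have "(\<Sum>b\<in>g ` supp \<mu>. plogp (marg \<mu> g b)) = (\<Sum>b\<in>g ` A. plogp (marg \<mu> g b))"
    using assms by (intro sum.mono_neutral_left) auto
  then show ?thesis unfolding ent_def plogp_def by (simp only:)
qed

lemma ent_mix_diff:
  assumes "finite (supp \<mu>1)" "finite (supp \<mu>2)"
  shows "ent (mix e \<mu>1 \<mu>2) g - ent \<mu>1 g =
    - (\<Sum>b\<in>g ` (supp \<mu>1 \<union> supp \<mu>2). plogp (mix e (marg \<mu>1 g) (marg \<mu>2 g) b) - plogp (marg \<mu>1 g b))"
proof -
  let ?A = "supp \<mu>1 \<union> supp \<mu>2"
  have fin: "finite ?A" using assms by simp
  have "ent (mix e \<mu>1 \<mu>2) g = - (\<Sum>b\<in>g ` ?A. plogp (mix e (marg \<mu>1 g) (marg \<mu>2 g) b))"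
    using ent_eq_sum[OF fin supp_mix, of e g] unfolding marg_mix[OF assms] .
  moreover have "ent \<mu>1 g = - (\<Sum>b\<in>g ` ?A. plogp (marg \<mu>1 g b))"
    by (rule ent_eq_sum[OF fin Un_upper1])
  ultimately show ?thesis by (simp only: sum_subtractf minus_diff_minus)
qed

lemma ent_mix_diff_bigo:
  assumes nonneg: "\<And>a. 0 \<le> \<mu>1 a" "\<And>a. 0 \<le> \<mu>2 a"
    and fin: "finite (supp \<mu>1)" "finite (supp \<mu>2)"
    and pos: "\<forall>t\<in>supp \<mu>2. marg \<mu>1 \<kappa> (\<kappa> t) > 0"
    and coarser: "\<forall>t t'. \<kappa> t = \<kappa> t' \<longrightarrow> g t = g t'"
  shows "(\<lambda>e. ent (mix e \<mu>1 \<mu>2) g - ent \<mu>1 g) \<in> O[at_right 0](\<lambda>e. e)"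
proof -
  have new: "marg \<mu>2 g b = 0" if "marg \<mu>1 g b = 0" for b
  proof (rule ccontr)
    assume "marg \<mu>2 g b \<noteq> 0"
    then obtain t where t: "t \<in> supp \<mu>2" "g t = b"
      using marg_nonzero_imp_supp[of \<mu>2 g b] by blast
    have "0 < marg \<mu>1 \<kappa> (\<kappa> t)" using pos t(1) by blast
    also have "\<dots> \<le> marg \<mu>1 g b"
      using marg_le_marg_coarser[OF nonneg(1) coarser, where a = t] t(2) by simp
    finally show False using that by simp
  qed
  have "(\<lambda>e. plogp ((1 - e) * marg \<mu>1 g b + e * marg \<mu>2 g b) - plogp (marg \<mu>1 g b))
      \<in> O[at_right 0](\<lambda>e. e)" for b
    using marg_nonneg[OF nonneg(1)] new by (rule plogp_affine_bigo)
  then show ?thesis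
    unfolding ent_mix_diff[OF fin] unfolding mix_def landau_o.big.uminus_in_iff
    by (rule big_sum_in_bigo)
qed

lemma ent_mix_diff_new_value_bigo:
  assumes nonneg: "\<And>a. 0 \<le> \<mu>1 a" "\<And>a. 0 \<le> \<mu>2 a"
    and fin: "finite (supp \<mu>1)" "finite (supp \<mu>2)"
    and atom: "\<forall>t\<in>supp \<mu>2. g t = b0"
    and new: "marg \<mu>1 g b0 = 0"
    and pos: "marg \<mu>2 g b0 > 0"
  shows "(\<lambda>e. ent (mix e \<mu>1 \<mu>2) g - ent \<mu>1 g + plogp (e * marg \<mu>2 g b0)) \<in> O[at_right 0](\<lambda>e. e)"
proof -
  let ?B = "g ` (supp \<mu>1 \<union> supp \<mu>2)"
  have "b0 \<in> ?B"
    using marg_nonzero_imp_supp[of \<mu>2 g b0] pos by force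
  moreover have "finite ?B" using fin by simp
  ultimately have split: "ent (mix e \<mu>1 \<mu>2) g - ent \<mu>1 g + plogp (e * marg \<mu>2 g b0) =
      - (\<Sum>b\<in>?B - {b0}. plogp (mix e (marg \<mu>1 g) (marg \<mu>2 g) b) - plogp (marg \<mu>1 g b))" for e
    unfolding ent_mix_diff[OF fin] sum.remove[OF \<open>finite ?B\<close> \<open>b0 \<in> ?B\<close>] by (simp add: new mix_def)
  have "marg \<mu>2 g b = 0" if "b \<noteq> b0" for b
    using marg_nonzero_imp_supp[of \<mu>2 g b] atom that by force
  then have "(\<lambda>e. plogp (mix e (marg \<mu>1 g) (marg \<mu>2 g) b) - plogp (marg \<mu>1 g b))
      \<in> O[at_right 0](\<lambda>e. e)" if "b \<in> ?B - {b0}" for b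
    using marg_nonneg[OF nonneg(1)] that unfolding mix_def by (intro plogp_affine_bigo) auto
  then show ?thesis
    unfolding split landau_o.big.uminus_in_iff by (rule big_sum_in_bigo)
qed

lemma sum_pos_imp_ex_pos:
  fixes f :: "'a \<Rightarrow> 'b::{ordered_comm_monoid_add, linorder}"
  assumes "0 < sum f A"
  shows "\<exists>a\<in>A. 0 < f a"
  using assms by (metis not_le sum_nonpos)

definition point_mass :: "'a \<Rightarrow> 'a \<Rightarrow> real" where
  "point_mass a0 = (\<lambda>a. if a = a0 then 1 else 0)"

lemma is_dist_point_mass: "is_dist (point_mass a0)"
proof -
  have "supp (point_mass a0) = {a0}"
    by (auto simp: supp_def point_mass_def)
  then show ?thesis by (simp add: is_dist_def point_mass_def)
qed

lemma joint_nonneg: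
  assumes "is_dist p" "is_bc q"
  shows "0 \<le> joint p q t"
  using assms by (cases t) (simp add: joint_def is_dist_def is_bc_def)

lemma finite_supp_joint:
  fixes q :: "'x \<Rightarrow> 'y::finite \<Rightarrow> 'z::finite \<Rightarrow> real"
  assumes "is_dist p"
  shows "finite (supp (joint p q))"
proof (rule finite_subset)
  show "supp (joint p q) \<subseteq> (\<lambda>((u, v, w, x), y, z). (u, v, w, x, y, z)) ` (supp p \<times> UNIV)"
    by (auto simp: supp_def joint_def image_iff)
  show "finite ((\<lambda>((u, v, w, x), y, z). (u, v, w, x, y, z)) ` (supp p \<times> (UNIV :: ('y \<times> 'z) set)))"
    using assms by (simp add: is_dist_def)
qed

lemma joint_mix: "joint (mix e p1 p2) q = mix e (joint p1 q) (joint p2 q)"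
  by (auto simp: joint_def mix_def algebra_simps)

lemma supp_joint_point_mass:
  "t \<in> supp (joint (point_mass (u, v, w, x)) q) \<Longrightarrow> \<exists>y z. t = (u, v, w, x, y, z)"
  by (cases t) (auto simp: supp_def joint_def point_mass_def split: if_splits)

lemma marg_joint_UWY_pos:
  fixes q :: "'x::finite \<Rightarrow> 'y::finite \<Rightarrow> 'z::finite \<Rightarrow> real"
  assumes p: "is_dist p" and q: "is_bc q" and qY: "\<forall>x y. (\<Sum>z\<in>UNIV. q x y z) > 0"
    and uw: "marg (joint p q) (\<lambda>t. (rvU t, rvW t)) (u, w) > 0"
  shows "marg (joint p q) (\<lambda>t. (rvU t, rvW t, rvY t)) (u, w, y) > 0"
proof -
  obtain t where "t \<in> supp (joint p q)" "(rvU t, rvW t) = (u, w)"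
    using marg_nonzero_imp_supp[of "joint p q" _ "(u, w)"] uw by force
  then obtain v x where "p (u, v, w, x) \<noteq> 0"
    by (cases t) (auto simp: rvU_def rvW_def supp_def joint_def)
  then have "p (u, v, w, x) > 0"
    using p by (simp add: is_dist_def less_le)
  moreover obtain z where "q x y z > 0"
    using sum_pos_imp_ex_pos qY by blast
  ultimately have "0 < joint p q (u, v, w, x, y, z)"
    by (simp add: joint_def)
  also have "\<dots> \<le> marg (joint p q) (\<lambda>t. (rvU t, rvW t, rvY t)) (u, w, y)"
    using p q
    by (intro marg_ge joint_nonneg finite_supp_joint) (simp_all add: rvU_def rvW_def rvY_def)
  finally show ?thesis .
qed

lemma marg_joint_VWZ_pos:
  fixes q :: "'x::finite \<Rightarrow> 'y::finite \<Rightarrow> 'z::finite \<Rightarrow> real"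
  assumes p: "is_dist p" and q: "is_bc q" and qZ: "\<forall>x z. (\<Sum>y\<in>UNIV. q x y z) > 0"
    and vw: "marg (joint p q) (\<lambda>t. (rvV t, rvW t)) (v, w) > 0"
  shows "marg (joint p q) (\<lambda>t. (rvV t, rvW t, rvZ t)) (v, w, z) > 0"
proof -
  obtain t where "t \<in> supp (joint p q)" "(rvV t, rvW t) = (v, w)"
    using marg_nonzero_imp_supp[of "joint p q" _ "(v, w)"] vw by force
  then obtain u x where "p (u, v, w, x) \<noteq> 0"
    by (cases t) (auto simp: rvV_def rvW_def supp_def joint_def)
  then have "p (u, v, w, x) > 0"
    using p by (simp add: is_dist_def less_le)
  moreover obtain y where "q x y z > 0"
    using sum_pos_imp_ex_pos qZ by blast
  ultimately have "0 < joint p q (u, v, w, x, y, z)"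
    by (simp add: joint_def)
  also have "\<dots> \<le> marg (joint p q) (\<lambda>t. (rvV t, rvW t, rvZ t)) (v, w, z)"
    using p q
    by (intro marg_ge joint_nonneg finite_supp_joint) (simp_all add: rvV_def rvW_def rvZ_def)
  finally show ?thesis .
qed

lemma marg_joint_point_mass_pos:
  fixes q :: "'x::finite \<Rightarrow> 'y::finite \<Rightarrow> 'z::finite \<Rightarrow> real"
  assumes q: "is_bc q"
  shows "marg (joint (point_mass (u, v, w, x)) q) (\<lambda>t. (rvU t, rvV t, rvW t)) (u, v, w) > 0"
proof -
  have "0 < (\<Sum>y\<in>UNIV. \<Sum>z\<in>UNIV. q x y z)"
    using q by (simp add: is_bc_def)
  then obtain y where "(\<Sum>z\<in>UNIV. q x y z) > 0"
    using sum_pos_imp_ex_pos by blast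
  then obtain z where "q x y z > 0"
    using sum_pos_imp_ex_pos by blast
  then have "0 < joint (point_mass (u, v, w, x)) q (u, v, w, x, y, z)"
    by (simp add: joint_def point_mass_def)
  also have "\<dots> \<le> marg (joint (point_mass (u, v, w, x)) q) (\<lambda>t. (rvU t, rvV t, rvW t)) (u, v, w)"
    using q is_dist_point_mass
    by (intro marg_ge joint_nonneg finite_supp_joint) (simp_all add: rvU_def rvV_def rvW_def)
  finally show ?thesis .
qed

lemma cmi_diff:
  "cmi \<nu> A B C - cmi \<mu> A B C =
     (ent \<nu> (\<lambda>t. (A t, C t)) - ent \<mu> (\<lambda>t. (A t, C t)))
   + (ent \<nu> (\<lambda>t. (B t, C t)) - ent \<mu> (\<lambda>t. (B t, C t)))
   - (ent \<nu> (\<lambda>t. (A t, B t, C t)) - ent \<mu> (\<lambda>t. (A t, B t, C t)))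
   - (ent \<nu> C - ent \<mu> C)"
  by (simp add: cmi_def)

lemma cmi_perturb_bigo:
  assumes "(\<lambda>e. ent (M e) (\<lambda>t. (A t, C t)) - ent \<mu> (\<lambda>t. (A t, C t))) \<in> O[F](h)"
    and "(\<lambda>e. ent (M e) (\<lambda>t. (B t, C t)) - ent \<mu> (\<lambda>t. (B t, C t))) \<in> O[F](h)"
    and "(\<lambda>e. ent (M e) (\<lambda>t. (A t, B t, C t)) - ent \<mu> (\<lambda>t. (A t, B t, C t))) \<in> O[F](h)"
    and "(\<lambda>e. ent (M e) C - ent \<mu> C) \<in> O[F](h)"
  shows "(\<lambda>e. cmi (M e) A B C - cmi \<mu> A B C) \<in> O[F](h)"
  unfolding cmi_diff by (intro sum_in_bigo assms)

lemma objective_mix_point_mass_bigo: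
  fixes q :: "'x::finite \<Rightarrow> 'y::finite \<Rightarrow> 'z::finite \<Rightarrow> real"
    and p :: "nat \<times> nat \<times> nat \<times> 'x \<Rightarrow> real" and u v w :: nat and x :: 'x
  defines "J \<equiv> joint p q" and "J\<delta> \<equiv> joint (point_mass (u, v, w, x)) q"
  assumes p: "is_dist p" and q: "is_bc q"
    and UWY: "\<forall>y. marg J (\<lambda>t. (rvU t, rvW t, rvY t)) (u, w, y) > 0"
    and VWZ: "\<forall>z. marg J (\<lambda>t. (rvV t, rvW t, rvZ t)) (v, w, z) > 0"
  shows "(\<lambda>e. objective lam q (mix e p (point_mass (u, v, w, x))) - objective lam q p
            - (ent (mix e J J\<delta>) (\<lambda>t. (rvU t, rvV t, rvW t)) - ent J (\<lambda>t. (rvU t, rvV t, rvW t))))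
         \<in> O[at_right 0](\<lambda>e. e)"
proof -
  have nonneg: "0 \<le> J t" "0 \<le> J\<delta> t" for t
    unfolding J_def J\<delta>_def using p q by (auto intro: joint_nonneg is_dist_point_mass)
  have fin: "finite (supp J)" "finite (supp J\<delta>)"
    unfolding J_def J\<delta>_def using p by (auto intro: finite_supp_joint is_dist_point_mass)
  have supp_J\<delta>: "\<exists>y z. t = (u, v, w, x, y, z)" if "t \<in> supp J\<delta>" for t
    using that unfolding J\<delta>_def by (rule supp_joint_point_mass)
  have stable_Y: "(\<lambda>e. ent (mix e J J\<delta>) g - ent J g) \<in> O[at_right 0](\<lambda>e. e)"
    if "\<forall>t t'. (rvU t, rvW t, rvY t) = (rvU t', rvW t', rvY t') \<longrightarrow> g t = g t'" for g
  proof (rule ent_mix_diff_bigo[OF nonneg fin _ that])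
    show "\<forall>t\<in>supp J\<delta>. 0 < marg J (\<lambda>t. (rvU t, rvW t, rvY t)) (rvU t, rvW t, rvY t)"
      using supp_J\<delta> UWY by (force simp: rvU_def rvW_def rvY_def)
  qed
  have stable_Z: "(\<lambda>e. ent (mix e J J\<delta>) g - ent J g) \<in> O[at_right 0](\<lambda>e. e)"
    if "\<forall>t t'. (rvV t, rvW t, rvZ t) = (rvV t', rvW t', rvZ t') \<longrightarrow> g t = g t'" for g
  proof (rule ent_mix_diff_bigo[OF nonneg fin _ that])
    show "\<forall>t\<in>supp J\<delta>. 0 < marg J (\<lambda>t. (rvV t, rvW t, rvZ t)) (rvV t, rvW t, rvZ t)"
      using supp_J\<delta> VWZ by (force simp: rvV_def rvW_def rvZ_def)
  qed
  define M where "M e = mix e J J\<delta>" for e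
  define dWY where "dWY e = mi (M e) rvW rvY - mi J rvW rvY" for e
  define dWZ where "dWZ e = mi (M e) rvW rvZ - mi J rvW rvZ" for e
  define dUYW where "dUYW e = cmi (M e) rvU rvY rvW - cmi J rvU rvY rvW" for e
  define dVZW where "dVZW e = cmi (M e) rvV rvZ rvW - cmi J rvV rvZ rvW" for e
  define dUVW where "dUVW e = (ent (M e) (\<lambda>t. (rvU t, rvW t)) - ent J (\<lambda>t. (rvU t, rvW t)))
    + (ent (M e) (\<lambda>t. (rvV t, rvW t)) - ent J (\<lambda>t. (rvV t, rvW t)))
    - (ent (M e) rvW - ent J rvW)" for e
  have "dWY \<in> O[at_right 0](\<lambda>e. e)" "dUYW \<in> O[at_right 0](\<lambda>e. e)"
    unfolding dWY_def dUYW_def M_def mi_def by (intro cmi_perturb_bigo stable_Y; simp)+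
  moreover have "dWZ \<in> O[at_right 0](\<lambda>e. e)" "dVZW \<in> O[at_right 0](\<lambda>e. e)"
    unfolding dWZ_def dVZW_def M_def mi_def by (intro cmi_perturb_bigo stable_Z; simp)+
  moreover have "dUVW \<in> O[at_right 0](\<lambda>e. e)"
    unfolding dUVW_def M_def by (intro sum_in_bigo stable_Y stable_Z; simp)
  moreover have "objective lam q (mix e p (point_mass (u, v, w, x))) - objective lam q p
      - (ent (M e) (\<lambda>t. (rvU t, rvV t, rvW t)) - ent J (\<lambda>t. (rvU t, rvV t, rvW t)))
      = lam * dWY e + (1 - lam) * dWZ e + dUYW e + dVZW e - dUVW e" for e
    by (simp add: objective_def Let_def joint_mix J_def J\<delta>_def M_def
        dWY_def dWZ_def dUYW_def dVZW_def dUVW_def mi_def cmi_def algebra_simps)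
  ultimately show ?thesis
    unfolding M_def[symmetric] by (simp add: sum_in_bigo)
qed

lemma eventually_objective_mix_point_mass_gt:
  fixes q :: "'x::finite \<Rightarrow> 'y::finite \<Rightarrow> 'z::finite \<Rightarrow> real"
    and p :: "nat \<times> nat \<times> nat \<times> 'x \<Rightarrow> real" and u v w :: nat and x :: 'x
  assumes p: "is_dist p" and q: "is_bc q"
    and UWY: "\<forall>y. marg (joint p q) (\<lambda>t. (rvU t, rvW t, rvY t)) (u, w, y) > 0"
    and VWZ: "\<forall>z. marg (joint p q) (\<lambda>t. (rvV t, rvW t, rvZ t)) (v, w, z) > 0"
    and new: "marg (joint p q) (\<lambda>t. (rvU t, rvV t, rvW t)) (u, v, w) = 0"
  shows "eventually (\<lambda>e. objective lam q (mix e p (point_mass (u, v, w, x))) > objective lam q p)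
           (at_right 0)"
proof -
  let ?\<delta> = "point_mass (u, v, w, x)"
  let ?c = "marg (joint ?\<delta> q) (\<lambda>t. (rvU t, rvV t, rvW t)) (u, v, w)"
  have "?c > 0"
    using q by (rule marg_joint_point_mass_pos)
  have UVW: "(\<lambda>e. ent (mix e (joint p q) (joint ?\<delta> q)) (\<lambda>t. (rvU t, rvV t, rvW t))
            - ent (joint p q) (\<lambda>t. (rvU t, rvV t, rvW t)) + plogp (e * ?c))
        \<in> O[at_right 0](\<lambda>e. e)"
    using supp_joint_point_mass \<open>?c > 0\<close>
    by (intro ent_mix_diff_new_value_bigo new joint_nonneg finite_supp_joint p q is_dist_point_mass)
      (force simp: rvU_def rvV_def rvW_def)+
  from sum_in_bigo(1)[OF objective_mix_point_mass_bigo[where x = x and lam = lam, OF p q UWY VWZ]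
      UVW]
  have "(\<lambda>e. objective lam q (mix e p ?\<delta>) - objective lam q p + plogp (e * ?c))
        \<in> O[at_right 0](\<lambda>e. e)"
    by (simp add: algebra_simps)
  from eventually_pos_if_plus_plogp_bigo[OF \<open>?c > 0\<close> this] show ?thesis
    by simp
qed

theorem lemma1:
  fixes q :: "'x::finite \<Rightarrow> 'y::finite \<Rightarrow> 'z::finite \<Rightarrow> real"
    and lam :: real
    and p :: "nat \<times> nat \<times> nat \<times> 'x \<Rightarrow> real"
    and u v w :: nat
  assumes bc: "is_bc q"
    and qY_pos: "\<forall>x y. (\<Sum>z\<in>UNIV. q x y z) > 0"
    and qZ_pos: "\<forall>x z. (\<Sum>y\<in>UNIV. q x y z) > 0"
    and lam: "0 \<le> lam" "lam \<le> 1"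
    and p_dist: "is_dist p"
    and H_zero: "ent (joint p q) (\<lambda>t. (rvU t, rvV t, rvW t, rvX t))
                   - ent (joint p q) (\<lambda>t. (rvU t, rvV t, rvW t)) = 0"
    and p_max: "\<forall>p'::nat \<times> nat \<times> nat \<times> 'x \<Rightarrow> real. is_dist p' \<longrightarrow>
                   objective lam q p' \<le> objective lam q p"
    and uw_pos: "marg (joint p q) (\<lambda>t. (rvU t, rvW t)) (u, w) > 0"
    and vw_pos: "marg (joint p q) (\<lambda>t. (rvV t, rvW t)) (v, w) > 0"
  shows "marg (joint p q) (\<lambda>t. (rvU t, rvV t, rvW t)) (u, v, w) > 0
         \<and> (\<forall>y. marg (joint p q) (\<lambda>t. (rvU t, rvW t, rvY t)) (u, w, y) > 0)
         \<and> (\<forall>z. marg (joint p q) (\<lambda>t. (rvV t, rvW t, rvZ t)) (v, w, z) > 0)"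
proof -
  have UWY: "\<forall>y. marg (joint p q) (\<lambda>t. (rvU t, rvW t, rvY t)) (u, w, y) > 0"
    using marg_joint_UWY_pos[OF p_dist bc qY_pos uw_pos] by blast
  have VWZ: "\<forall>z. marg (joint p q) (\<lambda>t. (rvV t, rvW t, rvZ t)) (v, w, z) > 0"
    using marg_joint_VWZ_pos[OF p_dist bc qZ_pos vw_pos] by blast
  have "marg (joint p q) (\<lambda>t. (rvU t, rvV t, rvW t)) (u, v, w) > 0"
  proof (rule ccontr)
    let ?\<delta> = "point_mass (u, v, w, undefined :: 'x)"
    assume "\<not> ?thesis"
    moreover have "0 \<le> marg (joint p q) (\<lambda>t. (rvU t, rvV t, rvW t)) (u, v, w)"
      by (rule marg_nonneg) (rule joint_nonneg[OF p_dist bc])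
    ultimately have "marg (joint p q) (\<lambda>t. (rvU t, rvV t, rvW t)) (u, v, w) = 0"
      by simp
    from eventually_objective_mix_point_mass_gt[OF p_dist bc UWY VWZ this]
    have "eventually (\<lambda>e. objective lam q (mix e p ?\<delta>) > objective lam q p \<and> 0 \<le> e \<and> e \<le> 1)
            (at_right 0)"
      by (intro eventually_conj eventually_at_right_less)
        (auto simp: eventually_at_right_field intro!: exI[of _ 1] elim!: eventually_mono)
    then obtain e where "objective lam q (mix e p ?\<delta>) > objective lam q p" "0 \<le> e" "e \<le> 1"
      using eventually_happens trivial_limit_at_right_real by blast
    moreover have "is_dist (mix e p ?\<delta>)"
      using p_dist is_dist_point_mass \<open>0 \<le> e\<close> \<open>e \<le> 1\<close> by (rule is_dist_mix)
    ultimately show False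
      using p_max by fastforce
  qed
  with UWY VWZ show ?thesis by blast
qed

end
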